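(* Let $\mathcal{D}$ be the arena of a $p$-periodic graph on $V$, $k\ge1$, and $\mathcal{A}^k$ an augmented $k$-arena of $\mathcal{D}$. Then $\mathcal{A}^k=\mathcal{A}^k_{\max}$ if and only if for every $k$-hyperedge $(t,X,y)\notin\mathcal{A}^k$, with $X=\langle x_1,\dots,x_k\rangle$, there is no $Z=\langle z_1,\dots,z_k\rangle\in[V]^k$ such that (1) $z_j\in\Gamma_t(x_j,\mathcal{D})$ for all $1\le j\le k$, and (2) $(t,y)$ is a shadow $k$-corner of $([t+1]_p,Z)$ with respect to $\mathcal{A}^k$.
   Context: Let $V$ be a finite set and $p\ge 1$ an integer; $[t]_p$ denotes $t\bmod p$. A $p$-periodic graph is the sequence of directed graphs $G_t=(V,E_{[t]_p})$ with $E_0,\dots,E_{p-1}\subseteq V\times V$ (self-loops allowed), each sinkless. Its arena $\mathcal{D}$ is the directed graph on $\mathbb{Z}_p\times V$ with $((i,u),([i+1]_p,v))\in E(\mathcal{D})$ iff $(u,v)\in E_i$; $\Gamma_t(u,\mathcal{D})=\{v:((t,u),([t+1]_p,v))\in E(\mathcal{D})\}$. $[V]^k$ denotes the set of multisets of $k$ elements of $V$. Game with $k$ cops: in each round $t$, with cops at $C=\langle c_1,\dots,c_k\rangle$ and robber at $r$, every cop $j$ must move to some $c_j'\in\Gamma_{[t]_p}(c_j,\mathcal{D})$; if some $c_j'=r$ the cops win; otherwise the robber must move to some $r'\in\Gamma_{[t]_p}(r,\mathcal{D})$ and the next round starts with cops at $\langle c_1',\dots,c_k'\rangle$ and robber at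 $r'$. A configuration $(t,C,r)$ ($t\in\mathbb{Z}_p$, $C\in[V]^k$, $r\in V$) is the state at the start of a round with index $\equiv t\pmod p$, cops to move; it is $k$-copwin if from it the cops can force capture in finitely many rounds against every robber strategy. A $k$-hyperedge is a triple $(t,X,y)$ with $t\in\mathbb{Z}_p$, $X\in[V]^k$, $y\in V$. The $k$-arena $\mathcal{D}^k$ is the set of $k$-hyperedges $(t,X,y)$ with $((t,x),([t+1]_p,y))\in E(\mathcal{D})$ for some $x\in X$. An augmented $k$-arena is a set $\mathcal{A}^k\supseteq\mathcal{D}^k$ of $k$-hyperedges such that each $(t,X,y)\in\mathcal{A}^k$ is a $k$-copwin configuration; $\mathcal{A}^k_{\max}$ is the maximum one (the union of all augmented $k$-arenas). For a set $\mathcal{A}^k$ of $k$-hyperedges, $\Gamma_t(X,\mathcal{A}^k)=\{y\in V:(t,X,y)\in\mathcal{A}^k\}$. Given $\mathcal{A}^k$, $(t,y)$ is a shadow $k$-corner of $([t+1]_p,Z)$, where $Z\in[V]^k$, if $y\notin Z$ and $\Gamma_t(y,\mathcal{D})\subseteq\Gamma_{[t+1]_p}(Z,\mathcal{A}^k)$. *)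

theory Defs
  imports Main "HOL-Library.Multiset"
begin

text \<open>A p-periodic graph on V: edge sets E 0, ..., E (p-1), each a sinkless
  relation on V. Time indices live in {0..<p}; [t]_p is t mod p.\<close>

definition periodic_graph :: "'v set \<Rightarrow> nat \<Rightarrow> (nat \<Rightarrow> ('v \<times> 'v) set) \<Rightarrow> bool" where
  "periodic_graph V p E \<longleftrightarrow> finite V \<and> p \<ge> 1 \<and>
     (\<forall>i<p. E i \<subseteq> V \<times> V \<and> (\<forall>u\<in>V. \<exists>v. (u, v) \<in> E i))"

definition Gam :: "nat \<Rightarrow> (nat \<Rightarrow> ('v \<times> 'v) set) \<Rightarrow> nat \<Rightarrow> 'v \<Rightarrow> 'v set" where
  "Gam p E t u = {v. (u, v) \<in> E (t mod p)}"

definition kmsets :: "'v set \<Rightarrow> nat \<Rightarrow> 'v multiset set" where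
  "kmsets V k = {X. size X = k \<and> set_mset X \<subseteq> V}"

definition cop_move :: "nat \<Rightarrow> (nat \<Rightarrow> ('v \<times> 'v) set) \<Rightarrow> nat \<Rightarrow> 'v multiset \<Rightarrow> 'v multiset \<Rightarrow> bool" where
  "cop_move p E t X Z \<longleftrightarrow> (\<exists>xs zs. mset xs = X \<and> mset zs = Z \<and> length xs = length zs \<and>
       (\<forall>j<length xs. zs ! j \<in> Gam p E t (xs ! j)))"

text \<open>k-copwin configurations (t, C, r): cops to move; least fixed point = cops can force
  capture in finitely many rounds against every robber strategy.\<close>
inductive_set copwin :: "'v set \<Rightarrow> nat \<Rightarrow> (nat \<Rightarrow> ('v \<times> 'v) set) \<Rightarrow> nat \<Rightarrow> (nat \<times> 'v multiset \<times> 'v) set"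
  for V p E k where
  win: "\<lbrakk> t < p; C \<in> kmsets V k; r \<in> V; cop_move p E t C C';
          r \<in># C' \<or> (\<forall>r' \<in> Gam p E t r. ((t + 1) mod p, C', r') \<in> copwin V p E k) \<rbrakk>
        \<Longrightarrow> (t, C, r) \<in> copwin V p E k"

definition hyperedges :: "'v set \<Rightarrow> nat \<Rightarrow> nat \<Rightarrow> (nat \<times> 'v multiset \<times> 'v) set" where
  "hyperedges V p k = {(t, X, y). t < p \<and> X \<in> kmsets V k \<and> y \<in> V}"

definition k_arena :: "'v set \<Rightarrow> nat \<Rightarrow> (nat \<Rightarrow> ('v \<times> 'v) set) \<Rightarrow> nat \<Rightarrow> (nat \<times> 'v multiset \<times> 'v) set" where
  "k_arena V p E k = {(t, X, y) \<in> hyperedges V p k. \<exists>x \<in># X. (x, y) \<in> E t}"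

definition augmented_arena :: "'v set \<Rightarrow> nat \<Rightarrow> (nat \<Rightarrow> ('v \<times> 'v) set) \<Rightarrow> nat \<Rightarrow> (nat \<times> 'v multiset \<times> 'v) set \<Rightarrow> bool" where
  "augmented_arena V p E k A \<longleftrightarrow> A \<subseteq> hyperedges V p k \<and> k_arena V p E k \<subseteq> A \<and>
     (\<forall>h \<in> A. h \<in> copwin V p E k)"

definition max_augmented_arena :: "'v set \<Rightarrow> nat \<Rightarrow> (nat \<Rightarrow> ('v \<times> 'v) set) \<Rightarrow> nat \<Rightarrow> (nat \<times> 'v multiset \<times> 'v) set" where
  "max_augmented_arena V p E k = \<Union>{A. augmented_arena V p E k A}"

definition GamA :: "(nat \<times> 'v multiset \<times> 'v) set \<Rightarrow> nat \<Rightarrow> 'v multiset \<Rightarrow> 'v set" where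
  "GamA A t X = {y. (t, X, y) \<in> A}"

definition shadow_corner :: "nat \<Rightarrow> (nat \<Rightarrow> ('v \<times> 'v) set) \<Rightarrow> (nat \<times> 'v multiset \<times> 'v) set \<Rightarrow> nat \<Rightarrow> 'v \<Rightarrow> 'v multiset \<Rightarrow> bool" where
  "shadow_corner p E A t y Z \<longleftrightarrow> y \<notin># Z \<and> Gam p E t y \<subseteq> GamA A ((t + 1) mod p) Z"

end

theory Submission
  imports Defs
begin

text \<open>An augmented arena can always be enlarged by a copwin hyperedge, so a maximal one must
  already contain every configuration won by moving the cops to a shadow corner position.
  Conversely, if no such configuration is missing from \<open>A\<close>, then induction on the copwin
  derivation shows that \<open>A\<close> contains every copwin configuration: a capture move yields a
  hyperedge of the k-arena, and otherwise the cops' target is a position of which the robber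
  is a shadow corner, all of whose successor configurations lie in \<open>A\<close> by induction.\<close>

lemma cop_move_size: "cop_move p E t X Z \<Longrightarrow> size Z = size X"
  unfolding cop_move_def by (metis size_mset)

lemma cop_move_target_edge:
  assumes "cop_move p E t X Z" "z \<in># Z"
  obtains x where "x \<in># X" "(x, z) \<in> E (t mod p)"
proof -
  from assms(1) obtain xs zs where moves: "mset xs = X" "mset zs = Z" "length xs = length zs"
      "\<forall>j<length xs. zs ! j \<in> Gam p E t (xs ! j)"
    unfolding cop_move_def by blast
  from assms(2) moves(2) obtain j where j: "j < length zs" "zs ! j = z"
    by (metis in_set_conv_nth set_mset_mset)
  have "(xs ! j, z) \<in> E (t mod p)" using moves(3,4) j unfolding Gam_def by auto
  moreover have "xs ! j \<in># X" using moves(1,3) j by auto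
  ultimately show thesis using that by blast
qed

lemma cop_move_kmsets:
  assumes "periodic_graph V p E" "X \<in> kmsets V k" "cop_move p E t X Z"
  shows "Z \<in> kmsets V k"
proof -
  have "set_mset Z \<subseteq> V"
  proof
    fix z assume "z \<in># Z"
    then obtain x where "(x, z) \<in> E (t mod p)" using cop_move_target_edge[OF assms(3)] by blast
    moreover have "t mod p < p" using assms(1) unfolding periodic_graph_def by simp
    ultimately show "z \<in> V" using assms(1) unfolding periodic_graph_def by blast
  qed
  with assms(2) cop_move_size[OF assms(3)] show ?thesis unfolding kmsets_def by simp
qed

lemma augmented_arena_subset_max:
  "augmented_arena V p E k A \<Longrightarrow> A \<subseteq> max_augmented_arena V p E k"
  unfolding max_augmented_arena_def by blast

lemma max_augmented_arena_subset_copwin: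
  "max_augmented_arena V p E k \<subseteq> copwin V p E k"
  unfolding max_augmented_arena_def augmented_arena_def by blast

lemma augmented_arena_insert:
  assumes "augmented_arena V p E k A" "h \<in> hyperedges V p k" "h \<in> copwin V p E k"
  shows "augmented_arena V p E k (insert h A)"
  using assms unfolding augmented_arena_def by blast

lemma shadow_corner_copwin:
  assumes "augmented_arena V p E k A" "(t, X, y) \<in> hyperedges V p k"
    and "cop_move p E t X Z" "shadow_corner p E A t y Z"
  shows "(t, X, y) \<in> copwin V p E k"
proof (rule copwin.win[OF _ _ _ assms(3)])
  show "t < p" "X \<in> kmsets V k" "y \<in> V" using assms(2) unfolding hyperedges_def by auto
  show "y \<in># Z \<or> (\<forall>r' \<in> Gam p E t y. ((t + 1) mod p, Z, r') \<in> copwin V p E k)"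
    using assms(1,4) unfolding shadow_corner_def GamA_def augmented_arena_def by blast
qed

lemma copwin_subset_if_no_shadow_corner:
  assumes "periodic_graph V p E" "augmented_arena V p E k A"
    and no_corner: "\<forall>(t, X, y) \<in> hyperedges V p k - A.
       \<not> (\<exists>Z \<in> kmsets V k. cop_move p E t X Z \<and> shadow_corner p E A t y Z)"
  shows "copwin V p E k \<subseteq> A"
proof clarify
  fix t0 C0 r0 assume "(t0, C0, r0) \<in> copwin V p E k"
  then show "(t0, C0, r0) \<in> A"
  proof (induction rule: copwin.induct)
    case (win t C r C')
    have hyperedge: "(t, C, r) \<in> hyperedges V p k"
      using win.hyps(1-3) unfolding hyperedges_def by simp
    show ?case
    proof (cases "r \<in># C'")
      case True
      then obtain x where "x \<in># C" "(x, r) \<in> E (t mod p)"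
        using cop_move_target_edge[OF win.hyps(4)] by blast
      then have "(t, C, r) \<in> k_arena V p E k"
        using hyperedge win.hyps(1) unfolding k_arena_def by auto
      then show ?thesis using assms(2) unfolding augmented_arena_def by blast
    next
      case False
      with win.IH have "shadow_corner p E A t r C'"
        unfolding shadow_corner_def GamA_def by blast
      moreover have "C' \<in> kmsets V k" using cop_move_kmsets[OF assms(1) win.hyps(2,4)] .
      ultimately show ?thesis using no_corner hyperedge win.hyps(4) by fastforce
    qed
  qed
qed

theorem theorem8:
  fixes V :: "'v set" and p k :: nat and E :: "nat \<Rightarrow> ('v \<times> 'v) set"
    and A :: "(nat \<times> 'v multiset \<times> 'v) set"
  assumes "periodic_graph V p E"
    and "k \<ge> 1"
    and "augmented_arena V p E k A"
  shows "A = max_augmented_arena V p E k \<longleftrightarrow>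
    (\<forall>(t, X, y) \<in> hyperedges V p k - A.
       \<not> (\<exists>Z \<in> kmsets V k. cop_move p E t X Z \<and> shadow_corner p E A t y Z))"
proof
  assume max: "A = max_augmented_arena V p E k"
  show "\<forall>(t, X, y) \<in> hyperedges V p k - A.
       \<not> (\<exists>Z \<in> kmsets V k. cop_move p E t X Z \<and> shadow_corner p E A t y Z)"
  proof clarify
    fix t X y Z
    assume "(t, X, y) \<in> hyperedges V p k" "(t, X, y) \<notin> A"
      and "cop_move p E t X Z" "shadow_corner p E A t y Z"
    with assms(3) have "augmented_arena V p E k (insert (t, X, y) A)"
      by (blast intro: augmented_arena_insert shadow_corner_copwin)
    with max \<open>(t, X, y) \<notin> A\<close> show False
      using augmented_arena_subset_max by blast
  qed
next
  assume "\<forall>(t, X, y) \<in> hyperedges V p k - A.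
       \<not> (\<exists>Z \<in> kmsets V k. cop_move p E t X Z \<and> shadow_corner p E A t y Z)"
  with assms(1,3) have "copwin V p E k \<subseteq> A"
    by (rule copwin_subset_if_no_shadow_corner)
  with assms(3) show "A = max_augmented_arena V p E k"
    using augmented_arena_subset_max max_augmented_arena_subset_copwin by blast
qed

end
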